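(* For every set $I\subseteq[n]$ of $k$ distinct participants, the secret $\mathbf s$ is uniquely determined by the shares $(t_i)_{i\in I}$: there is a function $g_I$ such that $g_I((t_i)_{i\in I})=\mathbf s$ for all values of $\mathbf s$ and of the random entries of $M$.
   Context: Fix integers $n\ge k\ge 2$ and $d\ge k$, and a finite field $\mathbb{F}_q$ with $q>n$ (the integers $1,\dots,n$ are regarded as distinct elements of $\mathbb{F}_q$). For $i\in[n]=\{1,\dots,n\}$ let $\psi_i=(1,i,i^2,\dots,i^{d-1})^T\in\mathbb{F}_q^d$. The secret is $\mathbf s=(s_1,\dots,s_{d-k+1})\in\mathbb{F}_q^{d-k+1}$; write $s_A=s_{d-k+1}\in\mathbb{F}_q$ and $s_B=(s_1,\dots,s_{d-k})^T\in\mathbb{F}_q^{d-k}$. The dealer forms the symmetric $d\times d$ matrix $$M=\begin{pmatrix} s_A & r_a^T & s_B^T\\ r_a & R_b & R_c^T\\ s_B & R_c & 0\end{pmatrix}$$ with row/column blocks of sizes $1,\,k-1,\,d-k$, where $r_a\in\mathbb{F}_q^{k-1}$, $R_b$ is a symmetric $(k-1)\times(k-1)$ matrix, $R_c$ is a $(d-k)\times(k-1)$ matrix, and $0$ is the $(d-k)\times(d-k)$ zero matrix; the $R=(k-1)d-\binom{k-1}{2}$ free entries of $r_a,R_b,R_c$ (for $R_b$: the entries on and above the diagonal) are independent, uniform on $\mathbb{F}_q$, and independent of $\mathbf s$. The share of participant $j$ is $t_j^T=\psi_j^T N$, where $N=\begin{pmatrix} s_A & s_B^T\\ r_a & R_c^T\\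 s_B & 0\end{pmatrix}$ is the $d\times(d-k+1)$ matrix formed by the first column and the last $d-k$ columns of $M$. *)

theory Defs
  imports Main "HOL-Library.FuncSet"
begin

text \<open>Matrices are 0-based functions nat => nat => 'a. Rows/columns of M are
  0..d-1, with blocks {0}, {1..k-1}, {k..d-1}.  The secret is a list s of length
  d-k+1 (s!0..s!(d-k-1) = s_B, s!(d-k) = s_A).  ra i = (r_a)_{i+1} (i<k-1),
  Rb i j (i<=j<k-1) are the on/above-diagonal entries of the symmetric R_b,
  Rc i j ((d-k) x (k-1)) are the entries of R_c.\<close>

definition dealer_M ::
  "nat \<Rightarrow> nat \<Rightarrow> 'a::field list \<Rightarrow> (nat \<Rightarrow> 'a) \<Rightarrow> (nat \<Rightarrow> nat \<Rightarrow> 'a)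
   \<Rightarrow> (nat \<Rightarrow> nat \<Rightarrow> 'a) \<Rightarrow> nat \<Rightarrow> nat \<Rightarrow> 'a" where
  "dealer_M d k s ra Rb Rc r c =
     (if r = 0 \<and> c = 0 then s ! (d - k)
      else if r = 0 \<and> 1 \<le> c \<and> c \<le> k - 1 then ra (c - 1)
      else if r = 0 \<and> k \<le> c then s ! (c - k)
      else if 1 \<le> r \<and> r \<le> k - 1 \<and> c = 0 then ra (r - 1)
      else if 1 \<le> r \<and> r \<le> k - 1 \<and> 1 \<le> c \<and> c \<le> k - 1 then
        (if r \<le> c then Rb (r - 1) (c - 1) else Rb (c - 1) (r - 1))
      else if 1 \<le> r \<and> r \<le> k - 1 \<and> k \<le> c then Rc (c - k) (r - 1)
      else if k \<le> r \<and> c = 0 then s ! (r - k)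
      else if k \<le> r \<and> 1 \<le> c \<and> c \<le> k - 1 then Rc (r - k) (c - 1)
      else 0)"

definition dealer_N ::
  "nat \<Rightarrow> nat \<Rightarrow> 'a::field list \<Rightarrow> (nat \<Rightarrow> 'a) \<Rightarrow> (nat \<Rightarrow> nat \<Rightarrow> 'a)
   \<Rightarrow> (nat \<Rightarrow> nat \<Rightarrow> 'a) \<Rightarrow> nat \<Rightarrow> nat \<Rightarrow> 'a" where
  "dealer_N d k s ra Rb Rc r c = dealer_M d k s ra Rb Rc r (if c = 0 then 0 else c + k - 1)"

text \<open>psi_i = (1, a_i, ..., a_i^(d-1)) where a_i is the field element representing i.\<close>
definition psi :: "(nat \<Rightarrow> 'a::field) \<Rightarrow> nat \<Rightarrow> nat \<Rightarrow> 'a" where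
  "psi \<alpha> i r = \<alpha> i ^ r"

definition share ::
  "nat \<Rightarrow> nat \<Rightarrow> (nat \<Rightarrow> 'a::field) \<Rightarrow> 'a list \<Rightarrow> (nat \<Rightarrow> 'a) \<Rightarrow> (nat \<Rightarrow> nat \<Rightarrow> 'a)
   \<Rightarrow> (nat \<Rightarrow> nat \<Rightarrow> 'a) \<Rightarrow> nat \<Rightarrow> 'a list" where
  "share d k \<alpha> s ra Rb Rc j =
     map (\<lambda>c. \<Sum>r<d. psi \<alpha> j r * dealer_N d k s ra Rb Rc r c) [0..<d - k + 1]"

end

theory Submission
  imports Defs "HOL-Computational_Algebra.Polynomial"
begin

text \<open>
  Column c of the share matrix of the participants in I is
  V_I * N_c, where V_I is the k x d Vandermonde matrix of the points
  alpha i (i in I) and N_c is column c of N.  For c >= 1, N_c is supported on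
  rows 0..k-1, so the k x k Vandermonde block determines N_c and in particular
  its top entry s_(c-1); this recovers s_B.  Column 0 is supported on rows
  0..k-1 once the now-known entries s_B in rows k..d-1 are subtracted, so its
  top entry s_A is recovered in the same way.

  The analytic core is that a polynomial of degree < k vanishing at k distinct
  points is zero (lemma vanishing_coeffs_zero).  The hypotheses k <= n and
  n < q of the theorem only ensure that such participant sets exist; the
  argument itself uses just that the points alpha i (i in I) are distinct.
\<close>

lemma vanishing_coeffs_zero:
  fixes x :: "'b \<Rightarrow> 'a::idom"
  assumes fin: "finite I" and inj: "inj_on x I"
    and van: "\<forall>i\<in>I. (\<Sum>r<card I. h r * x i ^ r) = 0"
    and r: "r < card I"
  shows "h r = 0"
proof -
  define p where "p = (\<Sum>r<card I. monom (h r) r)"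
  have root: "poly p (x i) = 0" if "i \<in> I" for i
    using van that by (simp add: p_def poly_sum poly_monom)
  have deg: "degree p \<le> card I - 1"
    unfolding p_def by (rule degree_sum_le) (auto intro: order_trans[OF degree_monom_le])
  have "p = 0"
  proof (rule ccontr)
    assume "p \<noteq> 0"
    have "card I = card (x ` I)" using inj by (simp add: card_image)
    also have "\<dots> \<le> card {z. poly p z = 0}"
      by (intro card_mono poly_roots_finite[OF \<open>p \<noteq> 0\<close>]) (auto simp: root)
    also have "\<dots> \<le> degree p" by (rule card_poly_roots_bound[OF \<open>p \<noteq> 0\<close>])
    finally show False using deg r by linarith
  qed
  moreover have "coeff p r = h r"
    unfolding p_def coeff_sum using r by (simp add: coeff_monom)
  ultimately show ?thesis by simp
qed

lemma vandermonde_kernel_low_support: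
  fixes x :: "'b \<Rightarrow> 'a::idom"
  assumes fin: "finite I" and inj: "inj_on x I" and kd: "card I \<le> d"
    and supp: "\<forall>r. card I \<le> r \<and> r < d \<longrightarrow> v r = 0"
    and ker: "\<forall>i\<in>I. (\<Sum>r<d. x i ^ r * v r) = 0"
    and r: "r < card I"
  shows "v r = 0"
proof (rule vanishing_coeffs_zero[OF fin inj _ r], intro ballI)
  fix i assume "i \<in> I"
  have "(\<Sum>r<d. x i ^ r * v r) = (\<Sum>r<card I. x i ^ r * v r)"
    by (rule sum.mono_neutral_right) (use kd supp in auto)
  then show "(\<Sum>r<card I. v r * x i ^ r) = 0"
    using ker \<open>i \<in> I\<close> by (simp add: mult.commute)
qed

lemma reconstruction_exists:
  assumes det: "\<And>s \<rho> s' \<rho>'. P s \<Longrightarrow> P s' \<Longrightarrow> F s \<rho> = F s' \<rho>' \<Longrightarrow> s = s'"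
  shows "\<exists>g. \<forall>s \<rho>. P s \<longrightarrow> g (F s \<rho>) = s"
proof (intro exI allI impI)
  fix s \<rho> assume "P s"
  let ?g = "\<lambda>y. SOME s. P s \<and> (\<exists>\<rho>. y = F s \<rho>)"
  have "P (?g (F s \<rho>)) \<and> (\<exists>\<rho>'. F s \<rho> = F (?g (F s \<rho>)) \<rho>')"
    by (rule someI_ex) (use \<open>P s\<close> in blast)
  then show "?g (F s \<rho>) = s" using det \<open>P s\<close> by metis
qed

lemma share_nth:
  "c < d - k + 1 \<Longrightarrow>
     share d k \<alpha> s ra Rb Rc j ! c = (\<Sum>r<d. \<alpha> j ^ r * dealer_N d k s ra Rb Rc r c)"
  unfolding share_def psi_def by (subst nth_map) (auto simp del: upt_Suc)

lemma dealer_N_col_zero_block: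
  assumes "2 \<le> k" "1 \<le> c" "k \<le> r"
  shows "dealer_N d k s ra Rb Rc r c = 0"
proof -
  have "\<not> c + k - 1 \<le> k - 1" "k \<le> c + k - 1" "\<not> r \<le> k - 1" "r \<noteq> 0" using assms by auto
  then show ?thesis using assms by (simp add: dealer_N_def dealer_M_def)
qed

lemma dealer_N_col_top:
  assumes "2 \<le> k" "1 \<le> c"
  shows "dealer_N d k s ra Rb Rc 0 c = s ! (c - 1)"
proof -
  have "\<not> c + k - 1 \<le> k - 1" "k \<le> c + k - 1" "c + k - 1 - k = c - 1" using assms by auto
  then show ?thesis using assms by (simp add: dealer_N_def dealer_M_def)
qed

lemma dealer_N_first_col_top:
  "2 \<le> k \<Longrightarrow> dealer_N d k s ra Rb Rc 0 0 = s ! (d - k)"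
  by (simp add: dealer_N_def dealer_M_def)

lemma dealer_N_first_col_bottom:
  assumes "2 \<le> k" "k \<le> r"
  shows "dealer_N d k s ra Rb Rc r 0 = s ! (r - k)"
proof -
  have "\<not> r \<le> k - 1" "r \<noteq> 0" using assms by auto
  then show ?thesis using assms by (simp add: dealer_N_def dealer_M_def)
qed

lemma shares_determine_secret:
  fixes \<alpha> :: "nat \<Rightarrow> 'a::field"
  assumes k2: "2 \<le> k" and kd: "k \<le> d"
    and fin: "finite I" and card: "card I = k" and inj: "inj_on \<alpha> I"
    and len: "length s = d - k + 1" "length s' = d - k + 1"
    and eq: "\<forall>i\<in>I. share d k \<alpha> s ra Rb Rc i = share d k \<alpha> s' ra' Rb' Rc' i"
  shows "s = s'"
proof -
  text \<open>v c is the difference of column c of the two matrices N; by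
    linearity of the shares it lies in the kernel of the Vandermonde matrix.\<close>
  define v where "v c r = dealer_N d k s ra Rb Rc r c - dealer_N d k s' ra' Rb' Rc' r c" for c r
  have ker: "\<forall>i\<in>I. (\<Sum>r<d. \<alpha> i ^ r * v c r) = 0" if "c < d - k + 1" for c
  proof
    fix i assume "i \<in> I"
    then have "share d k \<alpha> s ra Rb Rc i ! c = share d k \<alpha> s' ra' Rb' Rc' i ! c"
      using eq by simp
    then show "(\<Sum>r<d. \<alpha> i ^ r * v c r) = 0"
      using that by (simp add: share_nth v_def right_diff_distrib sum_subtractf)
  qed
  have top_zero: "v c 0 = 0"
    if "c < d - k + 1" "\<forall>r. k \<le> r \<and> r < d \<longrightarrow> v c r = 0" for c
    using vandermonde_kernel_low_support[OF fin inj _ _ ker[OF that(1)]] card kd that(2) k2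
    by auto
  have secret_B: "s ! j = s' ! j" if "j < d - k" for j
  proof -
    have "v (Suc j) 0 = 0"
      using that by (intro top_zero) (auto simp: v_def dealer_N_col_zero_block[OF k2])
    then show ?thesis by (simp add: v_def dealer_N_col_top[OF k2])
  qed
  have secret_A: "s ! (d - k) = s' ! (d - k)"
  proof -
    have "v 0 0 = 0"
      using kd by (intro top_zero) (auto simp: v_def dealer_N_first_col_bottom[OF k2] secret_B)
    then show ?thesis by (simp add: v_def dealer_N_first_col_top[OF k2])
  qed
  show ?thesis
  proof (rule nth_equalityI)
    show "length s = length s'" using len by simp
    fix j assume "j < length s"
    then have "j < d - k \<or> j = d - k" using len by auto
    then show "s ! j = s' ! j" using secret_A secret_B by auto
  qed
qed

theorem theorem2:
  fixes n k d :: nat and \<alpha> :: "nat \<Rightarrow> 'a::{finite,field}"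
  assumes "2 \<le> k" "k \<le> n" "k \<le> d" "n < card (UNIV :: 'a set)" "inj_on \<alpha> {1..n}"
  shows "\<forall>I. I \<subseteq> {1..n} \<and> card I = k \<longrightarrow>
           (\<exists>g. \<forall>s ra Rb Rc. length s = d - k + 1 \<longrightarrow>
              g (\<lambda>i\<in>I. share d k \<alpha> s ra Rb Rc i) = s)"
proof (intro allI impI)
  fix I :: "nat set" assume I: "I \<subseteq> {1..n} \<and> card I = k"
  then have fin: "finite I" and card: "card I = k" and inj: "inj_on \<alpha> I"
    using finite_subset inj_on_subset assms(5) by blast+
  let ?F = "\<lambda>s \<rho>. \<lambda>i\<in>I. share d k \<alpha> s (fst \<rho>) (fst (snd \<rho>)) (snd (snd \<rho>)) i"
  have "\<exists>g. \<forall>s \<rho>. length s = d - k + 1 \<longrightarrow> g (?F s \<rho>) = s"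
  proof (rule reconstruction_exists)
    fix s s' :: "'a list" and \<rho> \<rho>'
    assume len: "length s = d - k + 1" "length s' = d - k + 1" and eq: "?F s \<rho> = ?F s' \<rho>'"
    have "\<forall>i\<in>I. share d k \<alpha> s (fst \<rho>) (fst (snd \<rho>)) (snd (snd \<rho>)) i
                = share d k \<alpha> s' (fst \<rho>') (fst (snd \<rho>')) (snd (snd \<rho>')) i"
      using fun_cong[OF eq] by (metis restrict_apply')
    then show "s = s'"
      by (rule shares_determine_secret[OF assms(1,3) fin card inj len])
  qed
  then obtain g where g: "\<forall>s \<rho>. length s = d - k + 1 \<longrightarrow> g (?F s \<rho>) = s" by blast
  show "\<exists>g. \<forall>s ra Rb Rc. length s = d - k + 1 \<longrightarrow>
              g (\<lambda>i\<in>I. share d k \<alpha> s ra Rb Rc i) = s"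
  proof (intro exI allI impI)
    fix s :: "'a list" and ra Rb Rc assume "length s = d - k + 1"
    then show "g (\<lambda>i\<in>I. share d k \<alpha> s ra Rb Rc i) = s"
      using g[rule_format, of s "(ra, Rb, Rc)"] by simp
  qed
qed

end
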